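(* Let $r$ be a Hermitian symmetric polynomial in one complex variable with $r(p,\overline p)=0$ for some $p\in\mathbb{C}$. If $r\in\mathcal{Q}'(1)$, then $r$ is divisible, as a polynomial in $z$ and $\overline z$, by $|z-p|^2=(z-p)(\overline z-\overline p)$.
   Context: $\mathcal{Q}'(1)$: Hermitian symmetric polynomials $r$ in one variable with $r(z,\overline z)\ge0$ for all $z$ for which there exist a Hermitian symmetric polynomial $s\ge0$, not identically $0$, and a holomorphic polynomial mapping $F$ with $rs=\|F\|^2$. *)

theory Defs
  imports Complex_Main "HOL-Computational_Algebra.Polynomial"
begin

text \<open>A polynomial in the two independent variables z and w (w standing for conj z)
  is represented as a complex poly poly: the outer variable is w, the inner one z.
  The coefficient of z^j w^k is coeff (coeff r k) j.\<close>

type_synonym hpoly = "complex poly poly"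

definition herm_sym :: "hpoly \<Rightarrow> bool" where
  "herm_sym r \<longleftrightarrow> (\<forall>j k. coeff (coeff r k) j = cnj (coeff (coeff r j) k))"

definition heval :: "hpoly \<Rightarrow> complex \<Rightarrow> complex" where
  "heval r z = poly (poly r [:cnj z:]) z"

definition hnonneg :: "hpoly \<Rightarrow> bool" where
  "hnonneg r \<longleftrightarrow> (\<forall>z. Im (heval r z) = 0 \<and> 0 \<le> Re (heval r z))"

text \<open>The polynomial f(z) * conj(f)(w), i.e. |f(z)|^2 on the diagonal.\<close>
definition hsq1 :: "complex poly \<Rightarrow> hpoly" where
  "hsq1 f = [:f:] * map_poly (\<lambda>c. [:cnj c:]) f"

definition hnormsq :: "complex poly list \<Rightarrow> hpoly" where
  "hnormsq F = sum_list (map hsq1 F)"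

definition Q'1 :: "hpoly \<Rightarrow> bool" where
  "Q'1 r \<longleftrightarrow> herm_sym r \<and> hnonneg r \<and>
     (\<exists>s F. herm_sym s \<and> hnonneg s \<and> s \<noteq> 0 \<and> r * s = hnormsq F)"

end

theory Submission
  imports Defs "HOL-Computational_Algebra.Polynomial_Factorial"
    "HOL-Computational_Algebra.Field_as_Ring"
begin

text \<open>Write \<open>P = z - p\<close> and \<open>Q = w - cnj p\<close>, with \<open>w\<close> the variable standing for \<open>cnj z\<close>.
  Hermitian symmetry gives \<open>P dvd r \<longleftrightarrow> Q dvd r\<close>, and \<open>P\<close>, \<open>Q\<close> are coprime primes,
  so it suffices to show \<open>P dvd r\<close>. Otherwise pick \<open>r * s = \<parallel>F\<parallel>\<^sup>2\<close> with \<open>s \<noteq> 0\<close> of least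
  degree. Evaluating at \<open>(p, cnj p)\<close> gives \<open>\<parallel>F(p)\<parallel>\<^sup>2 = 0\<close>, so \<open>F = (z - p) G\<close> and
  \<open>\<parallel>F\<parallel>\<^sup>2 = P Q \<parallel>G\<parallel>\<^sup>2\<close>. As neither prime divides \<open>r\<close>, both divide \<open>s\<close>, and cancelling
  \<open>P Q\<close> yields a solution \<open>r * s' = \<parallel>G\<parallel>\<^sup>2\<close> of smaller degree.\<close>

definition heval2 :: "hpoly \<Rightarrow> complex \<Rightarrow> complex \<Rightarrow> complex" where
  "heval2 r z w = poly (poly r [:w:]) z"

abbreviation z_minus :: "complex \<Rightarrow> hpoly" where
  "z_minus p \<equiv> [:[:-p, 1:]:]"

abbreviation w_minus :: "complex \<Rightarrow> hpoly" where
  "w_minus c \<equiv> [:[:-c:], 1:]"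

lemma heval2_0 [simp]: "heval2 0 z w = 0"
  and heval2_add [simp]: "heval2 (x + y) z w = heval2 x z w + heval2 y z w"
  and heval2_diff [simp]: "heval2 (x - y) z w = heval2 x z w - heval2 y z w"
  and heval2_mult [simp]: "heval2 (x * y) z w = heval2 x z w * heval2 y z w"
  and heval2_z_minus [simp]: "heval2 (z_minus p) z w = z - p"
  and heval2_w_minus [simp]: "heval2 (w_minus c) z w = w - c"
  by (simp_all add: heval2_def)

lemma heval_eq_heval2: "heval r z = heval2 r z (cnj z)"
  by (simp add: heval_def heval2_def)

lemma heval2_eq_poly_map_poly: "heval2 x z w = poly (map_poly (\<lambda>c. poly c z) x) w"
  unfolding heval2_def by (induction x) (simp_all add: map_poly_pCons algebra_simps)

lemma heval2_eq_0_imp_coeff_root: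
  assumes "\<And>w. heval2 x z w = 0"
  shows "poly (coeff x k) z = 0"
proof -
  have "map_poly (\<lambda>c. poly c z) x = 0"
    using assms poly_all_0_iff_0 by (metis heval2_eq_poly_map_poly)
  then show ?thesis by (metis coeff_0 coeff_map_poly poly_0)
qed

lemma hpoly_eqI:
  assumes "\<And>z w. heval2 x z w = heval2 y z w"
  shows "x = y"
proof -
  have "poly (coeff (x - y) k) z = 0" for k z
    using assms by (intro heval2_eq_0_imp_coeff_root) simp
  then have "coeff (x - y) k = 0" for k
    using poly_all_0_iff_0 by blast
  then show ?thesis by (metis coeff_diff diff_eq_diff_eq diff_self poly_eqI)
qed

lemma poly_eq_sum_upto:
  fixes q :: "'a::{comm_semiring_0,semiring_1} poly"
  assumes "degree q \<le> N"
  shows "poly q x = (\<Sum>i\<le>N. coeff q i * x ^ i)"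
  unfolding poly_altdef using assms
  by (intro sum.mono_neutral_left) (auto simp: coeff_eq_0)

lemma heval2_eq_double_sum:
  assumes "degree x \<le> N" "\<And>k. degree (coeff x k) \<le> N"
  shows "heval2 x z w = (\<Sum>k\<le>N. \<Sum>j\<le>N. coeff (coeff x k) j * z ^ j * w ^ k)"
  using assms
  by (simp add: heval2_def poly_eq_sum_upto[of x N] poly_sum poly_eq_sum_upto[of "coeff x _" N]
      sum_distrib_right)

lemma herm_sym_degree_coeff_le:
  assumes "herm_sym r"
  shows "degree (coeff r k) \<le> degree r"
proof (rule degree_le, intro allI impI)
  fix j assume "degree r < j"
  then have "coeff r j = 0" by (simp add: coeff_eq_0)
  then show "coeff (coeff r k) j = 0"
    using assms unfolding herm_sym_def by (metis coeff_0 complex_cnj_zero)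
qed

lemma heval2_herm_sym:
  assumes "herm_sym r"
  shows "heval2 r z w = cnj (heval2 r (cnj w) (cnj z))"
proof -
  let ?N = "degree r"
  have sym: "coeff (coeff r k) j = cnj (coeff (coeff r j) k)" for j k
    using assms unfolding herm_sym_def by blast
  note sum_form = heval2_eq_double_sum[OF order_refl herm_sym_degree_coeff_le[OF assms]]
  have "cnj (heval2 r (cnj w) (cnj z))
      = (\<Sum>k\<le>?N. \<Sum>j\<le>?N. coeff (coeff r j) k * z ^ k * w ^ j)"
    by (simp add: sum_form sym[symmetric] mult_ac)
  also have "\<dots> = (\<Sum>j\<le>?N. \<Sum>k\<le>?N. coeff (coeff r j) k * z ^ k * w ^ j)"
    by (rule sum.swap)
  also have "\<dots> = heval2 r z w"
    by (simp add: sum_form)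
  finally show ?thesis by simp
qed

lemma z_minus_dvd_iff: "z_minus p dvd x \<longleftrightarrow> (\<forall>w. heval2 x p w = 0)"
proof
  assume "\<forall>w. heval2 x p w = 0"
  then have "poly (coeff x k) p = 0" for k
    by (intro heval2_eq_0_imp_coeff_root) blast
  then show "z_minus p dvd x"
    by (simp add: const_poly_dvd_iff poly_eq_0_iff_dvd)
qed (auto simp: heval2_def elim!: dvdE)

lemma w_minus_dvd_iff: "w_minus c dvd x \<longleftrightarrow> (\<forall>z. heval2 x z c = 0)"
proof
  assume "\<forall>z. heval2 x z c = 0"
  then have "poly x [:c:] = 0"
    using poly_all_0_iff_0 unfolding heval2_def by blast
  then show "w_minus c dvd x"
    using poly_eq_0_iff_dvd[of x "[:c:]"] by simp
qed (auto simp: heval2_def elim!: dvdE)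

lemma herm_sym_z_minus_dvd_iff:
  assumes "herm_sym r"
  shows "z_minus p dvd r \<longleftrightarrow> w_minus (cnj p) dvd r"
  unfolding z_minus_dvd_iff w_minus_dvd_iff
  using heval2_herm_sym[OF assms, of p] heval2_herm_sym[OF assms, of _ "cnj p"]
  by (metis complex_cnj_cnj complex_cnj_zero)

lemma prime_elem_z_minus: "prime_elem (z_minus p)"
  by (simp add: prime_elem_const_poly_iff prime_elem_linear_field_poly)

lemma prime_elem_w_minus: "prime_elem (w_minus c)"
  by (rule prime_elem_linear_poly) simp_all

lemma coprime_z_minus_w_minus: "coprime (z_minus p) (w_minus c)"
proof (rule prime_elem_imp_coprime[OF prime_elem_z_minus])
  have "heval2 (w_minus c) p (c + 1) \<noteq> 0" by simp
  then show "\<not> z_minus p dvd w_minus c"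
    unfolding z_minus_dvd_iff by blast
qed

lemma heval2_hsq1: "heval2 (hsq1 f) z w = poly f z * cnj (poly f (cnj w))"
proof -
  have "poly (map_poly (\<lambda>c. [:cnj c:]) f) [:w:] = [:cnj (poly f (cnj w)):]"
    by (induction f) (auto simp: map_poly_pCons)
  then show ?thesis by (simp add: heval2_def hsq1_def)
qed

lemma heval2_hnormsq_diag:
  "heval2 (hnormsq F) z (cnj z) = of_real (\<Sum>f\<leftarrow>F. (cmod (poly f z))\<^sup>2)"
  by (induction F) (simp_all add: hnormsq_def heval2_hsq1 complex_norm_square[symmetric])

lemma hsq1_linear_mult: "hsq1 ([:-p, 1:] * g) = z_minus p * w_minus (cnj p) * hsq1 g"
  by (rule hpoly_eqI)
    (simp only: heval2_hsq1 heval2_mult heval2_z_minus heval2_w_minus, simp add: algebra_simps)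

lemma hnormsq_linear_mult:
  "hnormsq (map ((*) [:-p, 1:]) G) = z_minus p * w_minus (cnj p) * hnormsq G"
  by (induction G) (simp_all only: hnormsq_def list.map sum_list.Cons sum_list.Nil
      hsq1_linear_mult distrib_left mult_zero_right)

lemma hnormsq_vanishing_factor:
  assumes "heval2 (hnormsq F) p (cnj p) = 0"
  shows "\<exists>G. hnormsq F = z_minus p * w_minus (cnj p) * hnormsq G"
proof
  have "(\<Sum>f\<leftarrow>F. (cmod (poly f p))\<^sup>2) = 0"
    using assms by (simp add: heval2_hnormsq_diag)
  then have "poly f p = 0" if "f \<in> set F" for f
    using that by (subst (asm) sum_list_nonneg_eq_0_iff) auto
  then have "F = map ((*) [:-p, 1:]) (map (\<lambda>f. f div [:-p, 1:]) F)"
    unfolding map_map o_def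
    by (intro map_idI[symmetric] dvd_mult_div_cancel) (auto simp: poly_eq_0_iff_dvd)
  then show "hnormsq F = z_minus p * w_minus (cnj p) * hnormsq (map (\<lambda>f. f div [:-p, 1:]) F)"
    by (metis hnormsq_linear_mult)
qed

lemma cancel_coprime_factors:
  assumes "\<not> z_minus p dvd r" "\<not> w_minus c dvd r"
    and "r * s = z_minus p * w_minus c * h"
  shows "\<exists>s'. s = z_minus p * w_minus c * s' \<and> r * s' = h"
proof -
  have "z_minus p dvd r * s"
    unfolding assms(3) mult.assoc by (rule dvd_triv_left)
  then have "z_minus p dvd s"
    using assms(1) prime_elem_dvd_mult_iff[OF prime_elem_z_minus] by blast
  then obtain s1 where s1: "s = z_minus p * s1" ..
  have "z_minus p * (r * s1) = z_minus p * (w_minus c * h)"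
    using assms(3) unfolding s1 by (simp only: mult_ac)
  then have eq1: "r * s1 = w_minus c * h"
    by (rule mult_left_cancel[THEN iffD1, rotated]) simp
  then have "w_minus c dvd s1"
    using assms(2) prime_elem_dvd_mult_iff[OF prime_elem_w_minus] by (metis dvd_triv_left)
  then obtain s' where s': "s1 = w_minus c * s'" ..
  have "w_minus c * (r * s') = w_minus c * h"
    using eq1 unfolding s' by (simp only: mult_ac)
  then have "r * s' = h"
    by (rule mult_left_cancel[THEN iffD1, rotated]) simp
  moreover have "s = z_minus p * w_minus c * s'"
    unfolding s1 s' by (simp only: mult.assoc)
  ultimately show ?thesis by blast
qed

lemma degree_z_minus_w_minus_mult:
  assumes "s \<noteq> 0"
  shows "degree (z_minus p * w_minus c * s) = degree s + 1"
proof -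
  have "degree (z_minus p * w_minus c) = 1"
    by (subst degree_mult_eq) simp_all
  then show ?thesis
    using assms by (subst degree_mult_eq) auto
qed

lemma no_sos_multiplier:
  assumes "herm_sym r" "heval2 r p (cnj p) = 0" "\<not> z_minus p dvd r"
  shows "s \<noteq> 0 \<Longrightarrow> r * s \<noteq> hnormsq F"
proof (induction "degree s" arbitrary: s F rule: less_induct)
  case less
  show ?case
  proof
    assume eq: "r * s = hnormsq F"
    have "heval2 (hnormsq F) p (cnj p) = 0"
      unfolding eq[symmetric] using assms(2) by simp
    then obtain G where "r * s = z_minus p * w_minus (cnj p) * hnormsq G"
      using hnormsq_vanishing_factor eq by metis
    moreover have "\<not> w_minus (cnj p) dvd r"
      using assms(1,3) herm_sym_z_minus_dvd_iff by blast
    ultimately obtain s' where s': "s = z_minus p * w_minus (cnj p) * s'" "r * s' = hnormsq G"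
      using cancel_coprime_factors assms(3) by blast
    then have "s' \<noteq> 0" using less.prems by auto
    then have "degree s = degree s' + 1"
      unfolding s'(1) by (rule degree_z_minus_w_minus_mult)
    then show False
      using less.hyps \<open>s' \<noteq> 0\<close> s'(2) by simp
  qed
qed

theorem lemma4p2:
  fixes r :: hpoly and p :: complex
  assumes "herm_sym r"
    and "heval r p = 0"
    and "Q'1 r"
  shows "[:[:- p, 1:]:] * [:[:- cnj p:], 1:] dvd r"
proof -
  obtain s F where "s \<noteq> 0" "r * s = hnormsq F"
    using assms(3) unfolding Q'1_def by blast
  then have z_dvd: "z_minus p dvd r"
    using no_sos_multiplier[OF assms(1)] assms(2) by (auto simp: heval_eq_heval2)
  moreover have "w_minus (cnj p) dvd r"
    using z_dvd herm_sym_z_minus_dvd_iff[OF assms(1)] by blast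
  ultimately show ?thesis
    using divides_mult coprime_z_minus_w_minus by blast
qed

end
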